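(* Let $\eta:G\to\mathrm{U}(1)(\mathbb{F}_{p^2}/\mathbb{F}_p)$ be the composite of $\det:G\to\mathrm{U}(1)(\mathbb{Q}_{p^2}/\mathbb{Q}_p)$ with reduction modulo $p$. Then $\eta$ is surjective and $\ker(\eta)=G_0$.
   Context: $p$ odd prime; $\mathbb{Q}_{p^2}$ the unramified quadratic extension of $\mathbb{Q}_p$, integers $\mathbb{Z}_{p^2}$, automorphism $x\mapsto\bar x$. $G=\mathrm{U}(1,1)(\mathbb{Q}_{p^2}/\mathbb{Q}_p)=\{g\in\mathrm{GL}_2(\mathbb{Q}_{p^2}):g^*sg=s\}$, $s=\begin{pmatrix}0&1\\1&0\end{pmatrix}$; $G_S=G\cap\mathrm{SL}_2(\mathbb{Q}_{p^2})$. $\mathrm{U}(1)(\mathbb{Q}_{p^2}/\mathbb{Q}_p)=\{x:x\bar x=1\}$, $\mathrm{U}(1)(\mathbb{F}_{p^2}/\mathbb{F}_p)=\{a\in\mathbb{F}_{p^2}^\times:a^{p+1}=1\}$, $\mathrm{U}(1)_1=\mathrm{U}(1)(\mathbb{Q}_{p^2}/\mathbb{Q}_p)\cap(1+p\mathbb{Z}_{p^2})$. $G_0$ is the subgroup of $G$ generated by $G_S$ and the scalar matrices $a\cdot\mathrm{id}$ with $a\in\mathrm{U}(1)_1$. *)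

theory Defs
  imports "HOL-Analysis.Analysis"
begin

text \<open>
We model Q_{p^2} axiomatically: a field K of characteristic 0 with a discrete
valuation v (integer valued on nonzero elements), complete for v, for which
p is a uniformizer (v p = 1), with residue field (valuation ring modulo p)
isomorphic to a finite field F of cardinality p^2, together with a nontrivial
involutive field automorphism (the Galois conjugation).  These data characterize
Q_{p^2} (with its Frobenius) up to isomorphism.
\<close>

definition val_ring :: "('k::field \<Rightarrow> int) \<Rightarrow> 'k set" where
  "val_ring v = {x. x = 0 \<or> v x \<ge> 0}"

definition max_ideal :: "('k::field \<Rightarrow> int) \<Rightarrow> 'k set" where
  "max_ideal v = {x. x = 0 \<or> v x \<ge> 1}"

definition discrete_valuation :: "('k::field \<Rightarrow> int) \<Rightarrow> bool" where
  "discrete_valuation v \<longleftrightarrow>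
     (\<forall>x y. x \<noteq> 0 \<and> y \<noteq> 0 \<longrightarrow> v (x * y) = v x + v y) \<and>
     (\<forall>x y. x \<noteq> 0 \<and> y \<noteq> 0 \<and> x + y \<noteq> 0 \<longrightarrow> v (x + y) \<ge> min (v x) (v y))"

definition v_cauchy :: "('k::field \<Rightarrow> int) \<Rightarrow> (nat \<Rightarrow> 'k) \<Rightarrow> bool" where
  "v_cauchy v f \<longleftrightarrow> (\<forall>N::int. \<exists>M. \<forall>m\<ge>M. \<forall>n\<ge>M. f m = f n \<or> v (f m - f n) \<ge> N)"

definition v_converges_to :: "('k::field \<Rightarrow> int) \<Rightarrow> (nat \<Rightarrow> 'k) \<Rightarrow> 'k \<Rightarrow> bool" where
  "v_converges_to v f L \<longleftrightarrow> (\<forall>N::int. \<exists>M. \<forall>n\<ge>M. f n = L \<or> v (f n - L) \<ge> N)"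

definition v_complete :: "('k::field \<Rightarrow> int) \<Rightarrow> bool" where
  "v_complete v \<longleftrightarrow> (\<forall>f. v_cauchy v f \<longrightarrow> (\<exists>L. v_converges_to v f L))"

definition residue_map :: "('k::field \<Rightarrow> int) \<Rightarrow> ('k \<Rightarrow> 'f::field) \<Rightarrow> bool" where
  "residue_map v red \<longleftrightarrow>
     (\<forall>x\<in>val_ring v. \<forall>y\<in>val_ring v. red (x + y) = red x + red y \<and> red (x * y) = red x * red y) \<and>
     red 1 = 1 \<and> red ` val_ring v = UNIV \<and>
     (\<forall>x\<in>val_ring v. red x = 0 \<longleftrightarrow> x \<in> max_ideal v)"

definition field_involution :: "('k::field \<Rightarrow> 'k) \<Rightarrow> bool" where
  "field_involution c \<longleftrightarrow>
     (\<forall>x y. c (x + y) = c x + c y \<and> c (x * y) = c x * c y) \<and> c 1 = 1 \<and>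
     (\<forall>x. c (c x) = x) \<and> (\<exists>x. c x \<noteq> x)"

definition is_Qp2 :: "nat \<Rightarrow> ('k::field_char_0 \<Rightarrow> int) \<Rightarrow> ('k \<Rightarrow> 'k) \<Rightarrow> ('k \<Rightarrow> 'f::{field,finite}) \<Rightarrow> bool" where
  "is_Qp2 p v c red \<longleftrightarrow>
     discrete_valuation v \<and> v_complete v \<and> v (of_nat p) = 1 \<and>
     CARD('f) = p ^ 2 \<and> residue_map v red \<and> field_involution c"

definition conj_transpose :: "('k \<Rightarrow> 'k) \<Rightarrow> 'k^2^2 \<Rightarrow> 'k^2^2" where
  "conj_transpose c g = (\<chi> i j. c (g $ j $ i))"

definition s_form :: "'k::field^2^2" where
  "s_form = (\<chi> i j. if i = j then 0 else 1)"

definition U11 :: "('k::field \<Rightarrow> 'k) \<Rightarrow> ('k^2^2) set" where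
  "U11 c = {g. invertible g \<and> conj_transpose c g ** s_form ** g = s_form}"

definition SU11 :: "('k::field \<Rightarrow> 'k) \<Rightarrow> ('k^2^2) set" where
  "SU11 c = {g \<in> U11 c. det g = 1}"

definition U1_1 :: "('k::field \<Rightarrow> int) \<Rightarrow> ('k \<Rightarrow> 'k) \<Rightarrow> 'k set" where
  "U1_1 v c = {x. x * c x = 1 \<and> x - 1 \<in> max_ideal v}"

definition U1_res :: "nat \<Rightarrow> 'f::field set" where
  "U1_res p = {a. a \<noteq> 0 \<and> a ^ (p + 1) = 1}"

definition gen_subgroup :: "('k::field^2^2) set \<Rightarrow> ('k^2^2) set" where
  "gen_subgroup S = \<Inter> {H. S \<subseteq> H \<and> mat 1 \<in> H \<and>
       (\<forall>a\<in>H. \<forall>b\<in>H. a ** b \<in> H) \<and> (\<forall>a\<in>H. matrix_inv a \<in> H)}"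

definition G0 :: "('k::field \<Rightarrow> int) \<Rightarrow> ('k \<Rightarrow> 'k) \<Rightarrow> ('k^2^2) set" where
  "G0 v c = gen_subgroup (SU11 c \<union> {mat a | a. a \<in> U1_1 v c})"

end

theory Submission
  imports Defs "HOL-Computational_Algebra.Polynomial" "HOL-Computational_Algebra.Primes"
begin

text \<open>
  The conjugation \<open>c\<close> preserves the valuation: \<open>x\<close> is integral iff \<open>1 + p x\<^sup>2\<close> is a square
  (by Hensel's lemma, and because \<open>v p = 1\<close> is odd), and every field automorphism respects
  this property. On the residue field \<open>c\<close> becomes the Frobenius \<open>x \<mapsto> x\<^sup>p\<close>: it must negate a
  Hensel lift \<open>Y\<close> of a square root of a non-square of \<open>F\<^sub>p\<close>, for otherwise the \<open>c\<close>-fixed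
  elements \<open>i + j Y\<close> would approximate every integral element and \<open>c\<close> would be trivial.

  Hence \<open>d = det g\<close> satisfies \<open>d c(d) = 1\<close>, so \<open>d\<close> is a unit whose reduction has norm
  \<open>d\<^sup>p\<^sup>+\<^sup>1 = 1\<close>; the matrices \<open>diag(B, c(B)\<^sup>-\<^sup>1)\<close> realise every \<open>b\<^sup>1\<^sup>-\<^sup>p\<close>, and these are all
  norm-one elements of \<open>F\<^sub>p\<^sub>2\<close>. If \<open>d \<equiv> 1\<close>, Hensel's lemma gives \<open>a \<equiv> 1\<close> with \<open>a\<^sup>2 = d\<close>; then
  \<open>a c(a) = \<plusminus>1\<close> must be \<open>1\<close>, and \<open>g = (a id)(a\<^sup>-\<^sup>1 g)\<close> with \<open>a\<^sup>-\<^sup>1 g \<in> SU(1,1)\<close>. Conversely the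
  generators of \<open>G\<^sub>0\<close> all have determinant \<open>\<equiv> 1\<close>.
\<close>

section \<open>Finite fields of order \<open>p\<^sup>2\<close>\<close>

lemma card_roots_power_eq_affine_le:
  fixes a b :: "'a::field"
  assumes "n \<ge> 2"
  shows "card {x. x ^ n = a + b * x} \<le> n"
proof -
  define q where "q = monom (1::'a) n + - [:a, b:]"
  have "degree (- [:a, b:]) < degree (monom (1::'a) n)"
    using assms by (simp add: degree_monom_eq)
  hence deg: "degree q = n"
    by (simp add: q_def degree_add_eq_left degree_monom_eq)
  hence "q \<noteq> 0" using assms by auto
  moreover have "{x. x ^ n = a + b * x} = {x. poly q x = 0}"
    by (auto simp: q_def poly_monom algebra_simps)
  ultimately show ?thesis
    using card_poly_roots_bound[of q] deg by simp
qed

lemma card_roots_power_eq_le: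
  "n \<ge> 2 \<Longrightarrow> card {x::'a::field. x ^ n = a} \<le> n"
  using card_roots_power_eq_affine_le[of n a 0] by simp

locale finite_field_p2 =
  fixes p :: nat and field_type :: "'f::{field,finite} itself"
  assumes CHAR_eq: "CHAR('f) = p" and odd_p: "odd p" and card_eq: "CARD('f) = p ^ 2"
begin

lemma prime_p: "prime p"
  using prime_CHAR_semidom[where 'a='f] finite_imp_CHAR_pos[where 'a='f] CHAR_eq by simp

lemma p_ge_3: "p \<ge> 3"
  using prime_ge_2_nat[OF prime_p] odd_p by (cases "p = 2") auto

lemma frobenius_add: "((x::'f) + y) ^ p = x ^ p + y ^ p"
  by (rule freshmans_dream) (simp_all add: CHAR_eq prime_p)

lemma frobenius_minus: "(- (x::'f)) ^ p = - (x ^ p)"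
  by (rule minus_power_prime_CHAR) (simp_all add: CHAR_eq prime_p)

lemma frobenius_diff: "((x::'f) - y) ^ p = x ^ p - y ^ p"
  using frobenius_add[of x "- y"] by (simp add: frobenius_minus)

lemma two_neq_zero: "(2::'f) \<noteq> 0"
  using of_nat_eq_0_iff_char_dvd[of 2, where 'a='f] CHAR_eq p_ge_3
  by (auto dest: dvd_imp_le)

lemma power_card_minus_1_eq: "(x::'f) \<noteq> 0 \<Longrightarrow> x ^ (p ^ 2 - 1) = 1"
proof -
  assume "x \<noteq> 0"
  hence "(\<Prod>y\<in>UNIV-{0}. x * y) = (\<Prod>y\<in>UNIV-{0}. y)"
    by (intro prod.reindex_bij_witness[of _ "\<lambda>y. y / x" "\<lambda>y. x * y"]) auto
  thus ?thesis
    by (simp add: prod.distrib card_Diff_singleton card_eq)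
qed

lemma power_card_eq: "(x::'f) ^ (p ^ 2) = x"
proof (cases "x = 0")
  case False
  have "x ^ (p ^ 2) = x ^ Suc (p ^ 2 - 1)"
    using p_ge_3 by simp
  also have "\<dots> = x"
    by (simp only: power_Suc2 power_card_minus_1_eq[OF False] mult_1)
  finally show ?thesis .
qed (use p_ge_3 in simp)

lemma frobenius_involutive: "((x::'f) ^ p) ^ p = x"
  using power_card_eq[of x] by (simp add: power_mult[symmetric] power2_eq_square)

definition Fp :: "'f set" where
  "Fp = {x. x ^ p = x}"

lemma Fp_diff: "x \<in> Fp \<Longrightarrow> y \<in> Fp \<Longrightarrow> x - y \<in> Fp"
  and Fp_divide: "x \<in> Fp \<Longrightarrow> y \<in> Fp \<Longrightarrow> x / y \<in> Fp"
  by (simp_all add: Fp_def frobenius_add frobenius_diff power_divide)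

lemma of_nat_power_p: "(of_nat k :: 'f) ^ p = of_nat k"
proof (induction k)
  case (Suc k)
  thus ?case
    by (simp add: frobenius_add)
qed (simp add: prime_gt_0_nat[OF prime_p])

lemma inj_on_of_nat_below_p: "inj_on (of_nat :: nat \<Rightarrow> 'f) {..<p}"
proof (rule linorder_inj_onI')
  fix i j assume "i \<in> {..<p}" "j \<in> {..<p}" "i < j"
  hence "\<not> CHAR('f) dvd j - i"
    using CHAR_eq by (auto dest: dvd_imp_le)
  hence "(of_nat (j - i) :: 'f) \<noteq> 0"
    by (simp add: of_nat_eq_0_iff_char_dvd)
  thus "(of_nat i :: 'f) \<noteq> of_nat j"
    using \<open>i < j\<close> by (simp add: of_nat_diff)
qed

lemma Fp_eq_of_nat_image: "Fp = of_nat ` {..<p}"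
proof -
  have "of_nat k \<in> Fp" for k
    by (simp add: Fp_def of_nat_power_p)
  hence sub: "of_nat ` {..<p} \<subseteq> Fp" by blast
  have "card (of_nat ` {..<p} :: 'f set) = p"
    by (simp add: card_image inj_on_of_nat_below_p)
  moreover have "card Fp \<le> p"
    using card_roots_power_eq_affine_le[of p "0::'f" 1] p_ge_3 by (simp add: Fp_def)
  ultimately show ?thesis
    using sub by (metis card_seteq finite)
qed

lemma card_Fp: "card Fp = p"
  unfolding Fp_eq_of_nat_image by (simp add: card_image inj_on_of_nat_below_p)

lemma Fp_neq_UNIV: "Fp \<noteq> UNIV"
proof
  assume "Fp = UNIV"
  hence "p = p ^ 2"
    using card_Fp card_eq by simp
  thus False
    using p_ge_3 by (simp add: power2_eq_square)
qed

lemma exists_antifixed: "\<exists>w::'f. w \<noteq> 0 \<and> w ^ p = - w"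
proof -
  obtain a :: 'f where "a \<notin> Fp"
    using Fp_neq_UNIV by blast
  hence "a - a ^ p \<noteq> 0 \<and> (a - a ^ p) ^ p = - (a - a ^ p)"
    by (simp add: Fp_def frobenius_diff frobenius_involutive)
  thus ?thesis by blast
qed

lemma antifixed_notin_Fp: "(w::'f) \<noteq> 0 \<Longrightarrow> w ^ p = - w \<Longrightarrow> w \<notin> Fp"
  using two_neq_zero by (auto simp: Fp_def)

lemma antifixed_square_in_Fp: "(w::'f) ^ p = - w \<Longrightarrow> w ^ 2 \<in> Fp"
  by (simp add: Fp_def power_mult[symmetric] mult.commute[of 2] power_mult)

lemma Fp_span:
  assumes "(w::'f) \<notin> Fp"
  shows "\<exists>a\<in>Fp. \<exists>b\<in>Fp. x = a + b * w"
proof -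
  let ?f = "\<lambda>(a, b). a + b * w"
  have "inj_on ?f (Fp \<times> Fp)"
  proof (rule inj_onI, clarify)
    fix a b a' b' assume ab: "a \<in> Fp" "b \<in> Fp" "a' \<in> Fp" "b' \<in> Fp"
      and eq: "a + b * w = a' + b' * w"
    show "a = a' \<and> b = b'"
    proof (cases "b = b'")
      case False
      hence "w = (a - a') / (b' - b)"
        using eq by (simp add: field_simps)
      hence "w \<in> Fp"
        using ab by (simp add: Fp_diff Fp_divide)
      thus ?thesis using assms by simp
    qed (use eq in simp)
  qed
  hence "card (?f ` (Fp \<times> Fp)) = CARD('f)"
    by (simp add: card_image card_cartesian_product card_Fp card_eq power2_eq_square)
  hence "?f ` (Fp \<times> Fp) = UNIV"
    by (simp add: card_subset_eq)
  hence "x \<in> ?f ` (Fp \<times> Fp)"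
    by simp
  thus ?thesis
    by auto
qed

text \<open>Counting: the fibres are root sets of degree \<open>p - 1\<close>, so the image has at least
  \<open>(p\<^sup>2 - 1)/(p - 1) = p + 1\<close> elements, while the norm-one group has at most \<open>p + 1\<close>.\<close>
lemma power_p_minus_1_image:
  "(\<lambda>b. b ^ (p - 1)) ` (UNIV - {0}) = {a::'f. a \<noteq> 0 \<and> a ^ (p + 1) = 1}"
    (is "?g ` ?S = ?U")
proof -
  have factor: "(p - 1) * (p + 1) = p ^ 2 - 1"
    by (simp add: power2_eq_square algebra_simps)
  have "?g b ^ (p + 1) = 1" if "b \<noteq> 0" for b :: 'f
    using power_card_minus_1_eq[OF that] by (simp only: power_mult[symmetric] factor)
  hence sub: "?g ` ?S \<subseteq> ?U" by auto
  have "card ?U \<le> card {a::'f. a ^ (p + 1) = 1}"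
    by (rule card_mono) auto
  also have "\<dots> \<le> p + 1"
    using p_ge_3 by (intro card_roots_power_eq_le) simp
  finally have card_U: "card ?U \<le> p + 1" .
  have fibre: "card {b \<in> ?S. ?g b = t} \<le> p - 1" for t
  proof -
    have "card {b \<in> ?S. ?g b = t} \<le> card {b. b ^ (p - 1) = t}"
      by (rule card_mono) auto
    also have "\<dots> \<le> p - 1"
      using p_ge_3 by (intro card_roots_power_eq_le) simp
    finally show ?thesis .
  qed
  have "?S = (\<Union>t\<in>?g ` ?S. {b \<in> ?S. ?g b = t})"
    by blast
  hence "card ?S \<le> (\<Sum>t\<in>?g ` ?S. card {b \<in> ?S. ?g b = t})"
    using card_UN_le[of "?g ` ?S" "\<lambda>t. {b \<in> ?S. ?g b = t}"] by simp
  also have "\<dots> \<le> card (?g ` ?S) * (p - 1)"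
    using sum_bounded_above[of "?g ` ?S" _ "p - 1"] fibre by simp
  finally have "(p + 1) * (p - 1) \<le> card (?g ` ?S) * (p - 1)"
    using factor card_eq by (simp add: card_Diff_singleton mult.commute)
  hence "p + 1 \<le> card (?g ` ?S)"
    by (rule mult_right_le_imp_le) (use p_ge_3 in simp)
  thus ?thesis
    using sub card_U by (intro card_seteq) auto
qed

end

section \<open>Complete discretely valued fields\<close>

locale discretely_valued_field =
  fixes v :: "'k::field \<Rightarrow> int"
  assumes val_discrete: "discrete_valuation v"
begin

abbreviation R where "R \<equiv> val_ring v"
abbreviation M where "M \<equiv> max_ideal v"

lemma val_mult: "x \<noteq> 0 \<Longrightarrow> y \<noteq> 0 \<Longrightarrow> v (x * y) = v x + v y"
  and val_add_ge: "x \<noteq> 0 \<Longrightarrow> y \<noteq> 0 \<Longrightarrow> x + y \<noteq> 0 \<Longrightarrow> min (v x) (v y) \<le> v (x + y)"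
  using val_discrete unfolding discrete_valuation_def by blast+

lemma val_one [simp]: "v 1 = 0"
  using val_mult[of 1 1] by simp

lemma val_minus_one [simp]: "v (- 1) = 0"
  using val_mult[of "- 1" "- 1"] by simp

lemma val_uminus [simp]: "v (- x) = v x"
  using val_mult[of "- 1" x] by (cases "x = 0") auto

lemma val_inverse: "x \<noteq> 0 \<Longrightarrow> v (inverse x) = - v x"
  using val_mult[of x "inverse x"] by simp

lemma val_power: "x \<noteq> 0 \<Longrightarrow> v (x ^ n) = int n * v x"
  by (induction n) (auto simp: val_mult algebra_simps)

lemma val_add_eq_left:
  assumes "x \<noteq> 0" "y \<noteq> 0" "v x < v y"
  shows "x + y \<noteq> 0" "v (x + y) = v x"
proof -
  show xy: "x + y \<noteq> 0"
    using assms by (metis add_eq_0_iff less_irrefl val_uminus)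
  have "min (v (x + y)) (v (- y)) \<le> v x"
    using val_add_ge[of "x + y" "- y"] assms xy by simp
  thus "v (x + y) = v x"
    using val_add_ge[of x y] assms xy by auto
qed

definition val_ge :: "int \<Rightarrow> 'k \<Rightarrow> bool" where
  "val_ge n x \<longleftrightarrow> x = 0 \<or> n \<le> v x"

lemma val_ge_0 [simp]: "val_ge n 0"
  and val_ge_uminus [simp]: "val_ge n (- x) \<longleftrightarrow> val_ge n x"
  by (simp_all add: val_ge_def)

lemma val_ge_add: "val_ge n x \<Longrightarrow> val_ge n y \<Longrightarrow> val_ge n (x + y)"
  unfolding val_ge_def using val_add_ge[of x y] by fastforce

lemma val_ge_diff: "val_ge n x \<Longrightarrow> val_ge n y \<Longrightarrow> val_ge n (x - y)"
  using val_ge_add[of n x "- y"] by simp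

lemma val_ge_mult: "val_ge n x \<Longrightarrow> val_ge m y \<Longrightarrow> val_ge (n + m) (x * y)"
  unfolding val_ge_def by (cases "x = 0"; cases "y = 0") (auto simp: val_mult)

lemma val_ge_mono: "val_ge n x \<Longrightarrow> m \<le> n \<Longrightarrow> val_ge m x"
  unfolding val_ge_def by auto

lemma eq_0_if_val_ge:
  assumes "\<And>n::nat. val_ge (int n) x"
  shows "x = 0"
  using assms[of "nat (v x + 1)"] by (auto simp: val_ge_def split: if_split_asm)

lemma val_ring_iff_val_ge: "x \<in> R \<longleftrightarrow> val_ge 0 x"
  and max_ideal_iff_val_ge: "x \<in> M \<longleftrightarrow> val_ge 1 x"
  by (simp_all add: val_ring_def max_ideal_def val_ge_def)

lemma val_ge_mult_val_ring: "val_ge n x \<Longrightarrow> y \<in> R \<Longrightarrow> val_ge n (x * y)"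
  using val_ge_mult[of n x 0 y] by (simp add: val_ring_iff_val_ge)

lemma val_ring_add: "x \<in> R \<Longrightarrow> y \<in> R \<Longrightarrow> x + y \<in> R"
  and val_ring_diff: "x \<in> R \<Longrightarrow> y \<in> R \<Longrightarrow> x - y \<in> R"
  and val_ring_mult: "x \<in> R \<Longrightarrow> y \<in> R \<Longrightarrow> x * y \<in> R"
  and val_ring_uminus: "x \<in> R \<Longrightarrow> - x \<in> R"
  by (simp_all add: val_ring_iff_val_ge val_ge_add val_ge_diff val_ge_mult_val_ring)

lemma val_ring_0 [simp]: "0 \<in> R"
  and val_ring_1 [simp]: "1 \<in> R"
  by (simp_all add: val_ring_def)

lemma one_notin_max_ideal [simp]: "1 \<notin> M"
  by (simp add: max_ideal_def)

lemma val_ring_of_nat [simp]: "of_nat n \<in> R"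
  by (induction n) (simp_all add: val_ring_add)

lemma val_ring_numeral [simp]: "numeral n \<in> R"
  using val_ring_of_nat[of "numeral n"] by simp

lemma val_ring_power: "x \<in> R \<Longrightarrow> x ^ n \<in> R"
  by (induction n) (simp_all add: val_ring_mult)

lemma max_ideal_subset_val_ring: "M \<subseteq> R"
  by (auto simp: val_ring_def max_ideal_def)

lemma max_ideal_mult: "x \<in> M \<Longrightarrow> y \<in> R \<Longrightarrow> x * y \<in> M"
  by (simp add: max_ideal_iff_val_ge val_ge_mult_val_ring)

lemma val_ring_if_close: "x - y \<in> M \<Longrightarrow> y \<in> R \<Longrightarrow> x \<in> R"
  using max_ideal_subset_val_ring val_ring_add[of "x - y" y] by auto

lemma val_eq_0_iff: "x \<noteq> 0 \<Longrightarrow> v x = 0 \<longleftrightarrow> x \<in> R \<and> inverse x \<in> R"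
  by (auto simp: val_ring_def val_inverse)

lemma val_ring_unit:
  "x \<in> R \<Longrightarrow> x \<notin> M \<Longrightarrow> x \<noteq> 0 \<and> v x = 0 \<and> inverse x \<in> R"
  by (auto simp: val_ring_def max_ideal_def val_inverse)

end

locale complete_discretely_valued_field = discretely_valued_field +
  assumes val_complete: "v_complete v"
begin

lemma limit_if_val_ge_steps:
  assumes steps: "\<And>n. val_ge (int n + 1) (f (Suc n) - f n)"
  obtains L where "\<And>n. val_ge (int n + 1) (L - f n)"
proof -
  have tail: "val_ge (int n + 1) (f m - f n)" if "n \<le> m" for m n
    using that
  proof (induction m rule: dec_induct)
    case (step m)
    have "f (Suc m) - f n = (f (Suc m) - f m) + (f m - f n)"
      by simp
    thus ?case
      using val_ge_add[OF val_ge_mono[OF steps[of m]] step.IH] step.hyps by simp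
  qed simp
  have "v_cauchy v f"
    unfolding v_cauchy_def
  proof (intro allI exI[of _ "nat N" for N] ballI impI)
    fix N :: int and m n assume "nat N \<le> m" "nat N \<le> n"
    hence "val_ge (int (nat N) + 1) ((f m - f (nat N)) - (f n - f (nat N)))"
      using tail by (blast intro: val_ge_diff)
    hence "val_ge (int (nat N) + 1) (f m - f n)"
      by simp
    hence "val_ge N (f m - f n)"
      by (rule val_ge_mono) simp
    thus "f m = f n \<or> N \<le> v (f m - f n)"
      by (simp add: val_ge_def)
  qed
  then obtain L where L: "v_converges_to v f L"
    using val_complete unfolding v_complete_def by blast
  have "val_ge (int n + 1) (L - f n)" for n
  proof -
    obtain K where "\<forall>m\<ge>K. f m = L \<or> int n + 1 \<le> v (f m - L)"
      using L unfolding v_converges_to_def by blast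
    hence K: "\<forall>m\<ge>K. val_ge (int n + 1) (f m - L)"
      by (simp add: val_ge_def)
    have "L - f n = (f (max K n) - f n) - (f (max K n) - L)"
      by simp
    thus ?thesis
      using val_ge_diff[OF tail[of n "max K n"], of "f (max K n) - L"] K by simp
  qed
  thus thesis by (rule that)
qed

lemma newton_sqrt_step:
  assumes "val_ge 1 (y - y0)" "val_ge n (y ^ 2 - z)" "1 \<le> n"
    and "u \<in> R" "2 * y0 * u = 1"
  defines "y' \<equiv> y - (y ^ 2 - z) * u"
  shows "val_ge 1 (y' - y0)" "val_ge (n + 1) (y' ^ 2 - z)"
proof -
  let ?e = "y ^ 2 - z"
  have eu: "val_ge n (?e * u)"
    using assms by (simp add: val_ge_mult_val_ring)
  show "val_ge 1 (y' - y0)"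
    using val_ge_diff[OF assms(1) val_ge_mono[OF eu assms(3)]] by (simp add: y'_def algebra_simps)
  have "y' ^ 2 - z = ?e * ((y0 - y) * (2 * u)) + (?e * u) * (?e * u)"
    using assms(5) by (simp add: y'_def power2_eq_square algebra_simps)
  moreover have "val_ge 1 (y0 - y)"
    using assms(1) val_ge_uminus[of 1 "y - y0"] by simp
  hence "val_ge (n + 1) (?e * ((y0 - y) * (2 * u)))"
    using assms val_ge_mult[OF assms(2) val_ge_mult_val_ring, of 1 "y0 - y" "2 * u"]
    by (simp add: val_ring_mult)
  moreover have "val_ge (n + 1) ((?e * u) * (?e * u))"
    using val_ge_mult[OF eu val_ge_mono[OF eu assms(3)]] .
  ultimately show "val_ge (n + 1) (y' ^ 2 - z)"
    by (simp add: val_ge_add)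
qed

lemma limit_square_eq:
  assumes L: "\<And>n. val_ge (int n + 1) (L - f n)"
    and f_R: "\<And>n. f n \<in> R" and f_sq: "\<And>n. val_ge (int n + 1) (f n ^ 2 - z)"
  shows "L ^ 2 = z"
proof (rule eq_0_if_val_ge[of "L ^ 2 - z", simplified])
  fix n
  have "L - f n \<in> R"
    using val_ge_mono[OF L[of n], of 0] by (simp add: val_ring_iff_val_ge)
  moreover have "L + f n = (L - f n) + 2 * f n"
    by simp
  ultimately have "L + f n \<in> R"
    by (metis f_R val_ring_add val_ring_mult val_ring_numeral)
  hence "val_ge (int n) ((L - f n) * (L + f n))"
    using val_ge_mono[OF L[of n]] by (simp add: val_ge_mult_val_ring)
  moreover have "val_ge (int n) (f n ^ 2 - z)"
    using val_ge_mono[OF f_sq[of n], of "int n"] by simp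
  moreover have "L ^ 2 - z = (L - f n) * (L + f n) + (f n ^ 2 - z)"
    by (simp add: power2_eq_square algebra_simps)
  ultimately show "val_ge (int n) (L ^ 2 - z)"
    by (metis val_ge_add)
qed

lemma hensel_sqrt:
  assumes "z \<in> R" "y0 \<in> R" "2 * y0 \<notin> M" "y0 ^ 2 - z \<in> M"
  obtains y where "y ^ 2 = z" "y - y0 \<in> M"
proof -
  define u where "u = inverse (2 * y0)"
  have u: "u \<in> R" "2 * y0 * u = 1"
    using val_ring_unit[of "2 * y0"] assms by (auto simp: u_def val_ring_mult)
  define f where "f = rec_nat y0 (\<lambda>_ y. y - (y ^ 2 - z) * u)"
  have f_Suc: "f (Suc n) = f n - (f n ^ 2 - z) * u" for n
    by (simp add: f_def)
  have inv: "val_ge 1 (f n - y0) \<and> val_ge (int n + 1) (f n ^ 2 - z)" for n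
  proof (induction n)
    case 0
    thus ?case using assms by (simp add: f_def max_ideal_iff_val_ge)
  next
    case (Suc n)
    thus ?case
      using newton_sqrt_step[of "f n" y0 "int n + 1" z u] u by (simp add: f_Suc add_ac)
  qed
  have f_R: "f n \<in> R" for n
    using inv[of n] assms(2) val_ring_if_close[of "f n" y0] by (simp add: max_ideal_iff_val_ge)
  have "val_ge (int n + 1) (f (Suc n) - f n)" for n
    using inv[of n] u(1) by (simp add: f_Suc val_ge_mult_val_ring)
  then obtain L where L: "\<And>n. val_ge (int n + 1) (L - f n)"
    using limit_if_val_ge_steps by blast
  hence "L ^ 2 = z"
    using limit_square_eq[of L f z] f_R inv by blast
  moreover have "L - y0 \<in> M"
    using L[of 0] by (simp add: f_def max_ideal_iff_val_ge)
  ultimately show thesis by (rule that)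
qed

end

section \<open>The unitary group \<open>U(1,1)\<close>\<close>

lemma matrix_inv_right: "invertible A \<Longrightarrow> A ** matrix_inv A = mat 1"
  unfolding invertible_def matrix_inv_def by (rule conjunct1[OF someI_ex])

lemma subset_gen_subgroup: "S \<subseteq> gen_subgroup S"
  by (auto simp: gen_subgroup_def)

lemma gen_subgroup_mult: "a \<in> gen_subgroup S \<Longrightarrow> b \<in> gen_subgroup S \<Longrightarrow> a ** b \<in> gen_subgroup S"
  by (auto simp: gen_subgroup_def)

lemma gen_subgroup_least:
  assumes "S \<subseteq> H" "mat 1 \<in> H" "\<And>a b. a \<in> H \<Longrightarrow> b \<in> H \<Longrightarrow> a ** b \<in> H"
    and "\<And>a. a \<in> H \<Longrightarrow> matrix_inv a \<in> H"
  shows "gen_subgroup S \<subseteq> H"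
  unfolding gen_subgroup_def using assms by (intro Inter_lower) auto

lemma SU11_subset_G0: "SU11 c \<subseteq> G0 v c"
  unfolding G0_def by (rule order_trans[OF _ subset_gen_subgroup]) blast

lemma mat_in_G0: "a \<in> U1_1 v c \<Longrightarrow> mat a \<in> G0 v c"
  unfolding G0_def by (rule subsetD[OF subset_gen_subgroup]) blast

lemma G0_mult: "a \<in> G0 v c \<Longrightarrow> b \<in> G0 v c \<Longrightarrow> a ** b \<in> G0 v c"
  unfolding G0_def by (rule gen_subgroup_mult)

lemma det_mat_2: "det (mat x :: 'a::comm_ring_1^2^2) = x ^ 2"
  by (simp add: det_2 mat_def power2_eq_square)

lemma mat_mult_mat: "(mat x :: 'a::comm_ring_1^2^2) ** mat y = mat (x * y)"
  by (simp add: vec_eq_iff matrix_matrix_mult_def mat_def sum_2 forall_2)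

locale field_conjugation =
  fixes c :: "'k::field \<Rightarrow> 'k"
  assumes conj_involution: "field_involution c"
begin

lemma conj_add: "c (x + y) = c x + c y"
  and conj_mult: "c (x * y) = c x * c y"
  and conj_one [simp]: "c 1 = 1"
  and conj_conj [simp]: "c (c x) = x"
  and conj_nontrivial: "\<exists>x. c x \<noteq> x"
  using conj_involution unfolding field_involution_def by auto

lemma conj_zero [simp]: "c 0 = 0"
  using conj_add[of 0 0] by (metis add_cancel_right_right)

lemma conj_uminus: "c (- x) = - c x"
  using conj_add[of x "- x"] by (simp add: eq_neg_iff_add_eq_0 add.commute)

lemma conj_diff: "c (x - y) = c x - c y"
  using conj_add[of x "- y"] by (simp add: conj_uminus)

lemma conj_of_nat [simp]: "c (of_nat n) = of_nat n"
  by (induction n) (simp_all add: conj_add)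

lemma conj_eq_0_iff [simp]: "c x = 0 \<longleftrightarrow> x = 0"
  by (metis conj_zero conj_conj)

lemma conj_inverse: "c (inverse x) = inverse (c x)"
proof (cases "x = 0")
  case False
  hence "c x * c (inverse x) = 1"
    by (simp flip: conj_mult)
  thus ?thesis
    by (simp add: inverse_unique)
qed simp

lemma conj_power: "c (x ^ n) = c x ^ n"
  by (induction n) (simp_all add: conj_mult)

lemma det_conj_transpose: "det (conj_transpose c g) = c (det g)"
  by (simp add: det_2 conj_transpose_def conj_diff conj_mult)

lemma conj_transpose_mult: "conj_transpose c (A ** B) = conj_transpose c B ** conj_transpose c A"
  by (simp add: vec_eq_iff conj_transpose_def matrix_matrix_mult_def sum_2 conj_add conj_mult
      mult.commute)

lemma conj_transpose_mat_1 [simp]: "conj_transpose c (mat 1) = mat 1"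
  by (simp add: vec_eq_iff conj_transpose_def mat_def)

lemma det_s_form: "det (s_form :: 'k^2^2) = - 1"
  by (simp add: det_2 s_form_def)

lemma U11_iff: "g \<in> U11 c \<longleftrightarrow> det g \<noteq> 0 \<and> conj_transpose c g ** s_form ** g = s_form"
  by (simp add: U11_def invertible_det_nz)

lemma U11_det_norm:
  assumes "g \<in> U11 c"
  shows "det g * c (det g) = 1"
proof -
  have "det (conj_transpose c g ** s_form ** g) = det (s_form :: 'k^2^2)"
    using assms by (simp add: U11_iff)
  thus ?thesis
    by (simp only: det_mul det_conj_transpose det_s_form) (simp add: mult.commute)
qed

lemma U11_mult:
  assumes "g \<in> U11 c" "h \<in> U11 c"
  shows "g ** h \<in> U11 c"
proof -
  have "conj_transpose c (g ** h) ** s_form ** (g ** h)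
      = conj_transpose c h ** (conj_transpose c g ** s_form ** g) ** h"
    by (simp add: conj_transpose_mult matrix_mul_assoc)
  thus ?thesis
    using assms by (simp add: U11_iff det_mul)
qed

lemma U11_matrix_inv:
  assumes g: "g \<in> U11 c"
  shows "matrix_inv g \<in> U11 c" "det (matrix_inv g) = inverse (det g)"
proof -
  have "invertible g"
    using g by (simp add: U11_def)
  hence inv: "g ** matrix_inv g = mat 1"
    by (simp add: matrix_inv_right)
  hence "det g * det (matrix_inv g) = 1"
    by (metis det_I det_mul)
  thus det_inv: "det (matrix_inv g) = inverse (det g)"
    by (metis inverse_unique)
  have "conj_transpose c (matrix_inv g) ** s_form ** matrix_inv g
     = conj_transpose c (matrix_inv g) ** (conj_transpose c g ** s_form ** g) ** matrix_inv g"
    using g by (simp add: U11_iff)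
  also have "\<dots> = conj_transpose c (g ** matrix_inv g) ** s_form ** (g ** matrix_inv g)"
    by (simp add: conj_transpose_mult matrix_mul_assoc)
  finally show "matrix_inv g \<in> U11 c"
    using inv det_inv g by (auto simp: U11_iff)
qed

lemma mat_in_U11: "x * c x = 1 \<Longrightarrow> (mat x :: 'k^2^2) \<in> U11 c"
  by (auto simp: U11_iff det_2 mat_def vec_eq_iff conj_transpose_def matrix_matrix_mult_def
      s_form_def sum_2 forall_2 mult.commute)

definition diag_conj :: "'k \<Rightarrow> 'k^2^2" where
  "diag_conj b = (\<chi> i j. if i = j then (if i = 1 then b else inverse (c b)) else 0)"

lemma diag_conj_in_U11: "b \<noteq> 0 \<Longrightarrow> diag_conj b \<in> U11 c"
  by (simp add: U11_iff det_2 diag_conj_def vec_eq_iff conj_transpose_def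
      matrix_matrix_mult_def s_form_def sum_2 forall_2 conj_inverse)

lemma det_diag_conj: "det (diag_conj b) = b * inverse (c b)"
  by (simp add: det_2 diag_conj_def)

end

section \<open>The unramified quadratic extension of \<open>Q\<^sub>p\<close>\<close>

locale Qp2 = complete_discretely_valued_field v + field_conjugation c
  for v :: "'k::field_char_0 \<Rightarrow> int" and c :: "'k \<Rightarrow> 'k" +
  fixes p :: nat and red :: "'k \<Rightarrow> 'f::{field,finite}"
  assumes prime_p: "prime p" and odd_p: "odd p" and val_p: "v (of_nat p) = 1"
    and card_residue_field: "CARD('f) = p ^ 2" and red_residue_map: "residue_map v red"
begin

lemma red_add: "x \<in> R \<Longrightarrow> y \<in> R \<Longrightarrow> red (x + y) = red x + red y"
  and red_mult: "x \<in> R \<Longrightarrow> y \<in> R \<Longrightarrow> red (x * y) = red x * red y"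
  and red_one [simp]: "red 1 = 1"
  and red_surj: "red ` R = UNIV"
  and red_eq_0_iff: "x \<in> R \<Longrightarrow> red x = 0 \<longleftrightarrow> x \<in> M"
  using red_residue_map unfolding residue_map_def by auto

lemma red_zero [simp]: "red 0 = 0"
  using red_add[of 0 0] by (metis add_cancel_right_right val_ring_0 add_0)

lemma red_uminus: "x \<in> R \<Longrightarrow> red (- x) = - red x"
  using red_add[of x "- x"] by (simp add: val_ring_uminus eq_neg_iff_add_eq_0 add.commute)

lemma red_diff: "x \<in> R \<Longrightarrow> y \<in> R \<Longrightarrow> red (x - y) = red x - red y"
  using red_add[of x "- y"] by (simp add: val_ring_uminus red_uminus)

lemma red_eq_iff: "x \<in> R \<Longrightarrow> y \<in> R \<Longrightarrow> red x = red y \<longleftrightarrow> x - y \<in> M"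
  using red_eq_0_iff[of "x - y"] by (simp add: red_diff val_ring_diff)

lemma red_of_nat [simp]: "red (of_nat n) = of_nat n"
  by (induction n) (simp_all add: red_add)

lemma red_numeral [simp]: "red (numeral n) = numeral n"
  using red_of_nat[of "numeral n"] by simp

lemma red_power: "x \<in> R \<Longrightarrow> red (x ^ n) = red x ^ n"
  by (induction n) (simp_all add: red_mult val_ring_power)

lemma red_inverse: "x \<in> R \<Longrightarrow> x \<notin> M \<Longrightarrow> red (inverse x) = inverse (red x)"
  using val_ring_unit[of x] red_mult[of x "inverse x"] by (simp add: inverse_unique)

lemma red_eq_1_iff: "x \<in> R \<Longrightarrow> red x = 1 \<longleftrightarrow> x - 1 \<in> M"
  using red_eq_iff[of x 1] by simp

lemma of_nat_p_in_max_ideal: "of_nat p \<in> M"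
  by (simp add: max_ideal_def val_p)

lemma p_gt_0 [simp]: "0 < p"
  using prime_gt_0_nat[OF prime_p] .

lemma CHAR_residue_field: "CHAR('f) = p"
proof -
  have "CHAR('f) dvd p"
    using red_eq_0_iff[of "of_nat p"] of_nat_p_in_max_ideal by (simp add: of_nat_eq_0_iff_char_dvd)
  moreover have "CHAR('f) \<noteq> 1"
    using of_nat_CHAR[where 'a='f] by auto
  ultimately show ?thesis
    using prime_p unfolding prime_nat_iff by blast
qed

sublocale residue: finite_field_p2 p "TYPE('f)"
  using CHAR_residue_field odd_p card_residue_field by unfold_locales

lemma hensel_sqrt_unit:
  assumes "z \<in> R" "y0 \<in> R" "y0 \<notin> M" "y0 ^ 2 - z \<in> M"
  obtains y where "y ^ 2 = z" "y - y0 \<in> M"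
proof (rule hensel_sqrt)
  have "red (2 * y0) \<noteq> 0"
    using assms residue.two_neq_zero red_eq_0_iff[of y0] by (simp add: red_mult)
  thus "2 * y0 \<notin> M"
    using assms red_eq_0_iff[of "2 * y0"] by (simp add: val_ring_mult)
qed (use assms in auto)

lemma val_ring_iff_square: "x \<in> R \<longleftrightarrow> (\<exists>y. y ^ 2 = 1 + of_nat p * x ^ 2)"
proof
  assume x: "x \<in> R"
  have "of_nat p * x ^ 2 \<in> M"
    by (rule max_ideal_mult[OF of_nat_p_in_max_ideal val_ring_power[OF x]])
  hence "1 ^ 2 - (1 + of_nat p * x ^ 2) \<in> M"
    by (simp add: max_ideal_iff_val_ge)
  moreover have "1 + of_nat p * x ^ 2 \<in> R"
    using x by (simp add: val_ring_add val_ring_mult val_ring_power)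
  ultimately show "\<exists>y. y ^ 2 = 1 + of_nat p * x ^ 2"
    by (metis hensel_sqrt_unit val_ring_1 one_notin_max_ideal)
next
  assume "\<exists>y. y ^ 2 = 1 + of_nat p * x ^ 2"
  then obtain y where y: "y ^ 2 = of_nat p * x ^ 2 + 1"
    by (auto simp: add.commute)
  show "x \<in> R"
  proof (rule ccontr)
    assume "x \<notin> R"
    hence x: "x \<noteq> 0" "v x < 0"
      by (auto simp: val_ring_def)
    hence "v (of_nat p * x ^ 2) = 1 + 2 * v x"
      by (simp add: val_mult val_power val_p)
    hence "y ^ 2 \<noteq> 0" "v (y ^ 2) = 1 + 2 * v x"
      using val_add_eq_left[of "of_nat p * x ^ 2" 1] x y by simp_all
    hence "2 * v y = 1 + 2 * v x"
      by (simp add: val_power)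
    thus False by presburger
  qed
qed

lemma conj_val_ring_iff: "c x \<in> R \<longleftrightarrow> x \<in> R"
proof -
  have "c x \<in> R" if "x \<in> R" for x
  proof -
    obtain y where "y ^ 2 = 1 + of_nat p * x ^ 2"
      using \<open>x \<in> R\<close> val_ring_iff_square by blast
    hence "c y ^ 2 = 1 + of_nat p * c x ^ 2"
      by (metis conj_add conj_mult conj_of_nat conj_one conj_power)
    thus ?thesis
      using val_ring_iff_square by blast
  qed
  thus ?thesis by (metis conj_conj)
qed

lemma val_conj: "v (c x) = v x"
proof -
  have nonneg: "v (c y) = v y" if "y \<noteq> 0" "0 \<le> v y" for y
  proof -
    define q :: 'k where "q = of_nat p ^ nat (v y)"
    have q: "q \<noteq> 0" "v q = v y" "c q = q"
      using that by (simp_all add: q_def val_power val_p conj_power)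
    have "v (y / q) = 0"
      using q that by (simp add: divide_inverse val_mult val_inverse)
    hence "v (c (y / q)) = 0"
      using q that by (simp add: val_eq_0_iff conj_val_ring_iff flip: conj_inverse)
    moreover have "c y = q * c (y / q)"
      using q conj_mult[of q "y / q"] by simp
    ultimately show ?thesis
      using q that by (simp add: val_mult)
  qed
  show ?thesis
  proof (cases "x = 0 \<or> 0 \<le> v x")
    case False
    hence "v (c (inverse x)) = v (inverse x)"
      by (intro nonneg) (simp_all add: val_inverse)
    thus ?thesis
      using False by (simp add: conj_inverse val_inverse)
  qed (metis conj_zero nonneg)
qed

lemma val_ge_conj_iff: "val_ge n (c x) \<longleftrightarrow> val_ge n x"
  by (simp add: val_ge_def val_conj)

lemma conj_max_ideal_iff: "c x \<in> M \<longleftrightarrow> x \<in> M"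
  by (simp add: max_ideal_iff_val_ge val_ge_conj_iff)

lemma span_congruent_mod_max_ideal:
  assumes "Y \<in> R" "red Y \<notin> residue.Fp" "x \<in> R"
  obtains i j where "x - (of_nat i + of_nat j * Y) \<in> M"
proof -
  obtain a b where ab: "a \<in> residue.Fp" "b \<in> residue.Fp" "red x = a + b * red Y"
    using residue.Fp_span[OF assms(2)] by blast
  then obtain i j where "a = of_nat i" "b = of_nat j"
    by (auto simp: residue.Fp_eq_of_nat_image)
  hence "red x = red (of_nat i + of_nat j * Y)"
    using ab assms by (simp add: red_add red_mult val_ring_mult)
  thus thesis
    using that assms red_eq_iff by (simp add: val_ring_add val_ring_mult)
qed

lemma approx_by_conj_fixed:
  assumes Y: "Y \<in> R" "c Y = Y" "red Y \<notin> residue.Fp" and x: "x \<in> R"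
  shows "\<exists>s. c s = s \<and> val_ge (int n) (x - s)"
proof (induction n)
  case 0
  show ?case
    using x by (intro exI[of _ 0]) (simp add: val_ring_iff_val_ge)
next
  case (Suc n)
  then obtain s where s: "c s = s" "val_ge (int n) (x - s)"
    by blast
  define q :: 'k where "q = of_nat p ^ n"
  have q: "q \<noteq> 0" "v q = int n" "c q = q"
    by (simp_all add: q_def val_power val_p conj_power)
  define r where "r = (x - s) / q"
  have r: "r \<in> R"
  proof (cases "x = s")
    case False
    thus ?thesis
      using s(2) q by (simp add: r_def val_ge_def val_ring_def divide_inverse val_mult val_inverse)
  qed (simp add: r_def)
  obtain i j where ij: "val_ge 1 (r - (of_nat i + of_nat j * Y))"
    using span_congruent_mod_max_ideal[OF Y(1,3) r] by (auto simp: max_ideal_iff_val_ge)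
  define s' where "s' = s + q * (of_nat i + of_nat j * Y)"
  have "c s' = s'"
    using s q Y by (simp add: s'_def conj_add conj_mult)
  moreover have "q * r = x - s"
    using q by (simp add: r_def)
  hence "x - s' = q * (r - (of_nat i + of_nat j * Y))"
    by (simp add: s'_def algebra_simps)
  hence "val_ge (int (Suc n)) (x - s')"
    using val_ge_mult[OF _ ij, of "int n" q] q by (simp add: val_ge_def add.commute)
  ultimately show ?case by blast
qed

lemma conj_moves_lift_of_non_Fp:
  assumes Y: "Y \<in> R" "red Y \<notin> residue.Fp"
  shows "c Y \<noteq> Y"
proof
  assume cY: "c Y = Y"
  have fixes_R: "c x = x" if x: "x \<in> R" for x
  proof -
    have "val_ge (int n) (c x - x)" for n
    proof -
      obtain s where s: "c s = s" "val_ge (int n) (x - s)"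
        using approx_by_conj_fixed[OF Y(1) cY Y(2) x] by blast
      have "c x - x = c (x - s) - (x - s)"
        using s by (simp add: conj_diff)
      thus ?thesis
        using s val_ge_diff val_ge_conj_iff by metis
    qed
    thus ?thesis
      using eq_0_if_val_ge[of "c x - x"] by simp
  qed
  have "c x = x" for x
  proof (cases "x \<in> R")
    case False
    hence "inverse x \<in> R"
      by (auto simp: val_ring_def val_inverse)
    thus ?thesis
      using fixes_R[of "inverse x"] by (simp add: conj_inverse)
  qed (rule fixes_R)
  thus False
    using conj_nontrivial by blast
qed

lemma exists_antifixed_lift:
  obtains Y where "Y \<in> R" "Y ^ 2 \<in> range of_nat" "red Y \<noteq> 0" "red Y ^ p = - red Y"
proof -
  obtain w :: 'f where w: "w \<noteq> 0" "w ^ p = - w"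
    using residue.exists_antifixed by blast
  obtain k where k: "w ^ 2 = of_nat k"
    using residue.antifixed_square_in_Fp[OF w(2)] by (auto simp: residue.Fp_eq_of_nat_image)
  obtain y0 where y0: "y0 \<in> R" "red y0 = w"
    using red_surj by (metis UNIV_I imageE)
  have "y0 \<notin> M"
    using y0 w red_eq_0_iff by auto
  moreover have "y0 ^ 2 - of_nat k \<in> M"
    using y0 k red_eq_iff[of "y0 ^ 2" "of_nat k"] by (simp add: red_power val_ring_power)
  ultimately obtain Y where Y: "Y ^ 2 = of_nat k" "Y - y0 \<in> M"
    using hensel_sqrt_unit[of "of_nat k" y0] y0 by auto
  have "Y \<in> R"
    using Y(2) y0(1) by (rule val_ring_if_close)
  moreover have "red Y = w"
    using red_eq_iff[OF \<open>Y \<in> R\<close> y0(1)] Y y0 by simp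
  ultimately show thesis
    using that Y w by simp
qed

lemma red_conj: "x \<in> R \<Longrightarrow> red (c x) = red x ^ p"
proof -
  assume x: "x \<in> R"
  obtain Y where Y: "Y \<in> R" "Y ^ 2 \<in> range of_nat" "red Y \<noteq> 0" "red Y ^ p = - red Y"
    by (rule exists_antifixed_lift)
  have non_Fp: "red Y \<notin> residue.Fp"
    using residue.antifixed_notin_Fp Y(3,4) by blast
  have "c Y ^ 2 = Y ^ 2"
    using Y(2) by (auto simp flip: conj_power)
  hence cY: "c Y = - Y"
    using conj_moves_lift_of_non_Fp[OF Y(1) non_Fp] by (simp add: power2_eq_iff)
  obtain i j where ij: "x - (of_nat i + of_nat j * Y) \<in> M"
    using span_congruent_mod_max_ideal[OF Y(1) non_Fp x] .
  moreover have "c (x - (of_nat i + of_nat j * Y)) = c x - (of_nat i - of_nat j * Y)"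
    using cY by (simp add: conj_diff conj_add conj_mult)
  ultimately have "c x - (of_nat i - of_nat j * Y) \<in> M"
    using conj_max_ideal_iff by metis
  hence "red (c x) = red (of_nat i - of_nat j * Y)"
    using x Y(1) red_eq_iff conj_val_ring_iff by (simp add: val_ring_diff val_ring_mult)
  also have "\<dots> = of_nat i - of_nat j * red Y"
    using Y(1) by (simp add: red_diff red_mult val_ring_mult)
  also have "\<dots> = (of_nat i + of_nat j * red Y) ^ p"
    using Y(4) by (simp add: residue.frobenius_add power_mult_distrib residue.of_nat_power_p)
  also have "of_nat i + of_nat j * red Y = red (of_nat i + of_nat j * Y)"
    using Y(1) by (simp add: red_add red_mult val_ring_mult)
  also have "\<dots> = red x"
    using ij x Y(1) red_eq_iff[of x "of_nat i + of_nat j * Y"]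
    by (simp add: val_ring_add val_ring_mult eq_commute)
  finally show ?thesis .
qed

lemma det_U11_unit:
  assumes "g \<in> U11 c"
  shows "det g \<in> R" "det g \<notin> M"
proof -
  have norm: "det g * c (det g) = 1"
    using U11_det_norm[OF assms] .
  hence nz: "det g \<noteq> 0" "c (det g) \<noteq> 0"
    by auto
  hence "v (det g) + v (c (det g)) = 0"
    using val_mult[of "det g" "c (det g)"] unfolding norm by simp
  hence "v (det g) = 0"
    by (simp add: val_conj)
  thus "det g \<in> R" "det g \<notin> M"
    using nz by (auto simp: val_ring_def max_ideal_def)
qed

lemma red_det_U11_mem_U1_res: "g \<in> U11 c \<Longrightarrow> red (det g) \<in> U1_res p"
proof -
  assume g: "g \<in> U11 c"
  note unit = det_U11_unit[OF g]
  have "red (det g) ^ (p + 1) = red (det g * c (det g))"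
    using unit red_conj by (simp add: red_mult conj_val_ring_iff mult.commute)
  also have "\<dots> = 1"
    by (simp add: U11_det_norm[OF g])
  finally show ?thesis
    using unit red_eq_0_iff by (simp add: U1_res_def)
qed

lemma U1_res_subset_red_det: "U1_res p \<subseteq> (\<lambda>g. red (det g)) ` U11 c"
proof
  fix a :: 'f assume "a \<in> U1_res p"
  hence "a \<noteq> 0" "a ^ (p + 1) = 1"
    by (simp_all add: U1_res_def)
  hence "inverse a \<noteq> 0" "inverse a ^ (p + 1) = 1"
    by (simp, simp only: power_inverse inverse_1)
  hence "inverse a \<in> {x. x \<noteq> 0 \<and> x ^ (p + 1) = 1}"
    by blast
  hence "inverse a \<in> (\<lambda>b. b ^ (p - 1)) ` (UNIV - {0})"
    by (simp only: residue.power_p_minus_1_image)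
  then obtain b where "b \<in> UNIV - {0}" "inverse a = b ^ (p - 1)"
    by (rule imageE)
  hence b: "b \<noteq> 0" "b ^ (p - 1) = inverse a"
    by simp_all
  obtain B where B: "B \<in> R" "red B = b"
    using red_surj by (metis UNIV_I imageE)
  have B_unit: "B \<notin> M" "c B \<in> R" "c B \<notin> M"
    using B b red_eq_0_iff conj_val_ring_iff conj_max_ideal_iff by auto
  hence "B \<noteq> 0"
    by (auto simp: max_ideal_def)
  have "red (det (diag_conj B)) = b / b ^ p"
    using B B_unit val_ring_unit[of "c B"]
    by (simp add: det_diag_conj red_mult red_inverse red_conj divide_inverse)
  also have "\<dots> = a"
    using b power_Suc2[of b "p - 1"] by (simp add: field_simps)
  finally have "a = red (det (diag_conj B))" ..
  thus "a \<in> (\<lambda>g. red (det g)) ` U11 c"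
    using diag_conj_in_U11[OF \<open>B \<noteq> 0\<close>] by (rule image_eqI)
qed

lemma exists_sqrt_in_U1_1:
  assumes "d * c d = 1" "d - 1 \<in> M"
  obtains a where "a \<in> U1_1 v c" "a ^ 2 = d"
proof -
  have "d \<in> R"
    using assms(2) by (rule val_ring_if_close) simp
  moreover have "1 ^ 2 - d \<in> M"
    using assms(2) val_ge_uminus[of 1 "d - 1"] by (simp add: max_ideal_iff_val_ge)
  ultimately obtain a where a: "a ^ 2 = d" "a - 1 \<in> M"
    using hensel_sqrt_unit[of d 1] by auto
  have aR: "a \<in> R"
    using a(2) by (rule val_ring_if_close) simp
  have "(a * c a) ^ 2 = 1"
    using a(1) assms(1) by (simp add: power_mult_distrib flip: conj_power)
  hence "a * c a = 1 \<or> a * c a = - 1"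
    by (simp add: power2_eq_1_iff)
  moreover have "red a = 1"
    using a(2) aR red_eq_1_iff by simp
  hence "red (a * c a) = 1"
    using aR red_conj by (simp add: red_mult conj_val_ring_iff)
  moreover have "red (- 1 :: 'k) \<noteq> 1"
    using residue.two_neq_zero red_uminus[of 1] by (auto simp: minus_equation_iff)
  ultimately have "a * c a = 1"
    by auto
  thus thesis
    using that a by (simp add: U1_1_def)
qed

lemma kernel_subset_G0: "{g \<in> U11 c. red (det g) = 1} \<subseteq> G0 v c"
proof clarify
  fix g assume g: "g \<in> U11 c" "red (det g) = 1"
  obtain a where a: "a \<in> U1_1 v c" "a ^ 2 = det g"
    using exists_sqrt_in_U1_1 U11_det_norm[OF g(1)] g(2) red_eq_1_iff det_U11_unit[OF g(1)]
    by blast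
  have a0: "a \<noteq> 0" and "inverse a * c (inverse a) = 1"
    using a(1) by (auto simp: U1_1_def conj_inverse simp flip: inverse_mult_distrib)
  hence "mat (inverse a) ** g \<in> U11 c"
    using g(1) U11_mult[OF mat_in_U11] by blast
  moreover have "det (mat (inverse a) ** g) = 1"
    using a0 by (simp add: det_mul det_mat_2 power_inverse flip: a(2))
  ultimately have "mat (inverse a) ** g \<in> G0 v c"
    using SU11_subset_G0 by (auto simp: SU11_def)
  hence "mat a ** (mat (inverse a) ** g) \<in> G0 v c"
    using G0_mult mat_in_G0[OF a(1)] by blast
  thus "g \<in> G0 v c"
    using a0 by (simp add: matrix_mul_assoc mat_mult_mat)
qed

lemma G0_subset_kernel: "G0 v c \<subseteq> {g \<in> U11 c. red (det g) = 1}"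
  unfolding G0_def
proof (rule gen_subgroup_least)
  have "mat a \<in> {g \<in> U11 c. red (det g) = 1}" if "a \<in> U1_1 v c" for a
  proof -
    have "a * c a = 1" "a \<in> R" "red a = 1"
      using that red_eq_1_iff val_ring_if_close[of a 1] by (auto simp: U1_1_def)
    thus ?thesis
      by (simp add: mat_in_U11 det_mat_2 red_power)
  qed
  thus "SU11 c \<union> {mat a |a. a \<in> U1_1 v c} \<subseteq> {g \<in> U11 c. red (det g) = 1}"
    by (auto simp: SU11_def)
next
  show "mat 1 \<in> {g \<in> U11 c. red (det g) = 1}"
    using mat_in_U11[of 1] by simp
next
  fix a b assume "a \<in> {g \<in> U11 c. red (det g) = 1}" "b \<in> {g \<in> U11 c. red (det g) = 1}"
  thus "a ** b \<in> {g \<in> U11 c. red (det g) = 1}"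
    using U11_mult det_U11_unit by (simp add: det_mul red_mult)
next
  fix a assume "a \<in> {g \<in> U11 c. red (det g) = 1}"
  thus "matrix_inv a \<in> {g \<in> U11 c. red (det g) = 1}"
    using U11_matrix_inv det_U11_unit by (simp add: red_inverse)
qed

end

lemma is_Qp2_imp_Qp2: "prime p \<Longrightarrow> odd p \<Longrightarrow> is_Qp2 p v c red \<Longrightarrow> Qp2 v c p red"
  by unfold_locales (simp_all add: is_Qp2_def)

theorem lemma5p7:
  fixes p :: nat and v :: "'k::field_char_0 \<Rightarrow> int" and c :: "'k \<Rightarrow> 'k"
    and red :: "'k \<Rightarrow> 'f::{field,finite}"
  assumes "prime p" and "odd p"
    and "is_Qp2 p v c red"
  shows "(\<lambda>g. red (det g)) ` U11 c = U1_res p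
    \<and> {g \<in> U11 c. red (det g) = 1} = G0 v c"
proof -
  interpret Qp2 v c p red
    using assms by (rule is_Qp2_imp_Qp2)
  show ?thesis
    using red_det_U11_mem_U1_res U1_res_subset_red_det kernel_subset_G0 G0_subset_kernel by blast
qed

end
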